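(* An effect algebra $A$ satisfies the Riesz decomposition property if and only if the category of elements $\int R(A)$ is amalgamated.
   Context: An effect algebra is a partial algebra $(A;+,0,1)$, with a binary partial operation $+$ and constants $0,1$, satisfying: (E1) if $a+b$ is defined, then $b+a$ is defined and $a+b=b+a$; (E2) if $a+b$ and $(a+b)+c$ are defined, then $b+c$ and $a+(b+c)$ are defined and $(a+b)+c=a+(b+c)$; (E3) for every $a$ there is a unique $a^\perp$ such that $a+a^\perp=1$; (E4) if $a+1$ is defined, then $a=0$. One-element effect algebras are allowed. The order is given by $a\le b$ iff $a+c=b$ for some $c$. Morphisms of effect algebras preserve $1$ and defined sums; $\mathbf{EA}$ is the category of effect algebras. $A$ has the Riesz decomposition property if for all $u,v_1,v_2\in A$ with $u\le v_1+v_2$ there exist $u_1\le v_1$ and $u_2\le v_2$ with $u=u_1+u_2$. Boolean algebras are effect algebras via: $x+y$ is defined iff $x\wedge y=0$, and then $x+y=x\vee y$. For $[n]=\{1,\dots,n\}$, $\mathbf{FinBool}$ is the full subcategory of Boolean algebras on the objects $2^{[n]}$, $n\in\mathbb N$. The category $\int R(A)$ has: - objects: pairs $(2^{[n]},g)$ with $g\colon 2^{[n]}\to A$ an effect-algebra morphism; - arrows $(2^{[n]},g)\to(2^{[n']},g')$: Boolean algebra morphisms $f\colon 2^{[n]}\to 2^{[n']}$ with $g'\circ f=g$. A category is amalgamated if every span $X_1\leftarrow X\rightarrow X_2$ in it can be completed to a commutative square. *)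

theory Defs
  imports Main
begin

text \<open>An effect algebra on the whole type 'a: partial sum pl (None = undefined), zero z, unit u.\<close>
definition effect_algebra :: "('a \<Rightarrow> 'a \<Rightarrow> 'a option) \<Rightarrow> 'a \<Rightarrow> 'a \<Rightarrow> bool" where
  "effect_algebra pl z u \<longleftrightarrow>
     (\<forall>a b. pl a b \<noteq> None \<longrightarrow> pl b a \<noteq> None \<and> pl a b = pl b a) \<and>
     (\<forall>a b c d. pl a b = Some d \<and> pl d c \<noteq> None \<longrightarrow>
        (\<exists>e. pl b c = Some e \<and> pl a e \<noteq> None \<and> pl d c = pl a e)) \<and>
     (\<forall>a. \<exists>!b. pl a b = Some u) \<and>
     (\<forall>a. pl a u \<noteq> None \<longrightarrow> a = z)"

definition ea_le :: "('a \<Rightarrow> 'a \<Rightarrow> 'a option) \<Rightarrow> 'a \<Rightarrow> 'a \<Rightarrow> bool" where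
  "ea_le pl a b \<longleftrightarrow> (\<exists>c. pl a c = Some b)"

definition riesz_decomposition :: "('a \<Rightarrow> 'a \<Rightarrow> 'a option) \<Rightarrow> bool" where
  "riesz_decomposition pl \<longleftrightarrow>
     (\<forall>x v1 v2 s. pl v1 v2 = Some s \<and> ea_le pl x s \<longrightarrow>
        (\<exists>x1 x2. ea_le pl x1 v1 \<and> ea_le pl x2 v2 \<and> pl x1 x2 = Some x))"

text \<open>The finite Boolean algebra 2^[n] has carrier Pow {1..n}.
  Effect-algebra morphisms 2^[n] -> A (only values on the carrier matter).\<close>
definition ea_hom_from_pow :: "('a \<Rightarrow> 'a \<Rightarrow> 'a option) \<Rightarrow> 'a \<Rightarrow> nat \<Rightarrow> (nat set \<Rightarrow> 'a) \<Rightarrow> bool" where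
  "ea_hom_from_pow pl u n g \<longleftrightarrow>
     g {1..n} = u \<and>
     (\<forall>X Y. X \<subseteq> {1..n} \<and> Y \<subseteq> {1..n} \<and> X \<inter> Y = {} \<longrightarrow> pl (g X) (g Y) = Some (g (X \<union> Y)))"

definition bool_hom :: "nat \<Rightarrow> nat \<Rightarrow> (nat set \<Rightarrow> nat set) \<Rightarrow> bool" where
  "bool_hom n m f \<longleftrightarrow>
     (\<forall>X. X \<subseteq> {1..n} \<longrightarrow> f X \<subseteq> {1..m}) \<and>
     f {} = {} \<and> f {1..n} = {1..m} \<and>
     (\<forall>X Y. X \<subseteq> {1..n} \<and> Y \<subseteq> {1..n} \<longrightarrow> f (X \<union> Y) = f X \<union> f Y \<and> f (X \<inter> Y) = f X \<inter> f Y) \<and>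
     (\<forall>X. X \<subseteq> {1..n} \<longrightarrow> f ({1..n} - X) = {1..m} - f X)"

text \<open>Objects of \<integral>R(A): pairs (n, g) with g an effect-algebra morphism 2^[n] -> A.\<close>
definition elem_obj :: "('a \<Rightarrow> 'a \<Rightarrow> 'a option) \<Rightarrow> 'a \<Rightarrow> nat \<times> (nat set \<Rightarrow> 'a) \<Rightarrow> bool" where
  "elem_obj pl u ob \<longleftrightarrow> ea_hom_from_pow pl u (fst ob) (snd ob)"

definition elem_arr :: "nat \<times> (nat set \<Rightarrow> 'a) \<Rightarrow> nat \<times> (nat set \<Rightarrow> 'a) \<Rightarrow> (nat set \<Rightarrow> nat set) \<Rightarrow> bool" where
  "elem_arr ob ob' f \<longleftrightarrow> bool_hom (fst ob) (fst ob') f \<and>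
     (\<forall>X. X \<subseteq> {1..fst ob} \<longrightarrow> snd ob' (f X) = snd ob X)"

text \<open>\<integral>R(A) is amalgamated: every span can be completed to a commutative square
  (arrows with the same domain are equal iff they agree on the carrier).\<close>
definition elem_cat_amalgamated :: "('a \<Rightarrow> 'a \<Rightarrow> 'a option) \<Rightarrow> 'a \<Rightarrow> bool" where
  "elem_cat_amalgamated pl u \<longleftrightarrow>
     (\<forall>ob ob1 ob2 f1 f2.
        elem_obj pl u ob \<and> elem_obj pl u ob1 \<and> elem_obj pl u ob2 \<and>
        elem_arr ob ob1 f1 \<and> elem_arr ob ob2 f2 \<longrightarrow>
        (\<exists>ob3 k1 k2. elem_obj pl u ob3 \<and> elem_arr ob1 ob3 k1 \<and> elem_arr ob2 ob3 k2 \<and>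
           (\<forall>X. X \<subseteq> {1..fst ob} \<longrightarrow> k1 (f1 X) = k2 (f2 X))))"

end

theory Submission
  imports Defs
begin

text \<open>A Boolean algebra morphism \<open>2^[n] \<rightarrow> 2^[m]\<close> is the inverse image map of a function
  \<open>[m] \<rightarrow> [n]\<close>, so an arrow \<open>(2^[n], g) \<rightarrow> (2^[m], g')\<close> of \<open>\<integral>R(A)\<close> amounts to decomposing each
  value \<open>g {i}\<close> as the sum of the \<open>g' {j}\<close> over the fibre of \<open>i\<close>.
  If \<open>A\<close> has the Riesz decomposition property, any two finite decompositions of one element have
  a common refinement. Given a span, refining the two decompositions of every \<open>g {i}\<close> gives a
  family indexed by the fibre product of the two maps; enumerating it yields the amalgamating
  object, the two projections being the arrows that complete the square.
  Conversely, if \<open>x \<le> v1 + v2 = s\<close>, the decompositions \<open>s = v1 + v2\<close> and \<open>s = x + t\<close> refine the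
  partition \<open>u = s + s\<^sup>\<perp>\<close>. In an amalgamation of the resulting span, \<open>x, v1, v2\<close> become images of
  subsets \<open>C, B1, B2\<close> of one \<open>2^[m]\<close> with \<open>C \<subseteq> B1 \<union> B2\<close>, and the images of \<open>C \<inter> B1\<close>, \<open>C \<inter> B2\<close>
  decompose \<open>x\<close> as required.\<close>

definition preim :: "(nat \<Rightarrow> nat) \<Rightarrow> nat \<Rightarrow> nat set \<Rightarrow> nat set" where
  "preim \<phi> m X = {j \<in> {1..m}. \<phi> j \<in> X}"

definition fibre_product :: "(nat \<Rightarrow> nat) \<Rightarrow> nat \<Rightarrow> (nat \<Rightarrow> nat) \<Rightarrow> nat \<Rightarrow> (nat \<times> nat) set" where
  "fibre_product \<phi>1 n1 \<phi>2 n2 = {(j, k). j \<in> {1..n1} \<and> k \<in> {1..n2} \<and> \<phi>1 j = \<phi>2 k}"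

definition triple :: "'a \<Rightarrow> 'a \<Rightarrow> 'a \<Rightarrow> nat \<Rightarrow> 'a" where
  "triple x y w i = (if i = 1 then x else if i = 2 then y else w)"

lemma preim_fibre_product_square:
  assumes "\<forall>l\<in>{1..m}. \<beta> l \<in> fibre_product \<phi>1 n1 \<phi>2 n2"
  shows "preim (fst \<circ> \<beta>) m (preim \<phi>1 n1 X) = preim (snd \<circ> \<beta>) m (preim \<phi>2 n2 X)"
  using assms unfolding preim_def fibre_product_def by fastforce

lemma bool_hom_preim: "\<forall>j\<in>{1..m}. \<phi> j \<in> {1..n} \<Longrightarrow> bool_hom n m (preim \<phi> m)"
  unfolding bool_hom_def preim_def by auto

lemma bool_homD:
  assumes "bool_hom n m f"
  shows bool_hom_subset: "X \<subseteq> {1..n} \<Longrightarrow> f X \<subseteq> {1..m}"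
    and bool_hom_empty: "f {} = {}"
    and bool_hom_top: "f {1..n} = {1..m}"
    and bool_hom_Un: "X \<subseteq> {1..n} \<Longrightarrow> Y \<subseteq> {1..n} \<Longrightarrow> f (X \<union> Y) = f X \<union> f Y"
    and bool_hom_Int: "X \<subseteq> {1..n} \<Longrightarrow> Y \<subseteq> {1..n} \<Longrightarrow> f (X \<inter> Y) = f X \<inter> f Y"
  using assms unfolding bool_hom_def by auto

lemma bool_hom_UN_singletons:
  assumes f: "bool_hom n m f" and X: "X \<subseteq> {1..n}"
  shows "f X = (\<Union>i\<in>X. f {i})"
proof -
  have "finite X" using X finite_subset by blast
  then show ?thesis using X
  proof (induction rule: finite_induct)
    case empty
    then show ?case using bool_hom_empty[OF f] by simp
  next
    case (insert i X)
    have "f (insert i X) = f {i} \<union> f X" using bool_hom_Un[OF f, of "{i}" X] insert.prems by simp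
    with insert.IH insert.prems show ?case by simp
  qed
qed

text \<open>\<open>\<phi> j\<close> is the unique atom \<open>i\<close> with \<open>j \<in> f {i}\<close>.\<close>
lemma bool_hom_preim_repr:
  assumes f: "bool_hom n m f"
  obtains \<phi> where "\<forall>j\<in>{1..m}. \<phi> j \<in> {1..n}" and "\<forall>X. X \<subseteq> {1..n} \<longrightarrow> f X = preim \<phi> m X"
proof -
  have "\<exists>i. i \<in> {1..n} \<and> j \<in> f {i}" if "j \<in> {1..m}" for j
  proof -
    have "j \<in> f {1..n}" using that bool_hom_top[OF f] by simp
    then show ?thesis using bool_hom_UN_singletons[OF f, of "{1..n}"] by auto
  qed
  then obtain \<phi> where \<phi>: "\<phi> j \<in> {1..n}" "j \<in> f {\<phi> j}" if "j \<in> {1..m}" for j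
    by metis
  have atoms_disjoint: "i = i'" if "i \<in> {1..n}" "i' \<in> {1..n}" "j \<in> f {i}" "j \<in> f {i'}" for i i' j
  proof (rule ccontr)
    assume "i \<noteq> i'"
    then have "f {i} \<inter> f {i'} = {}"
      using bool_hom_Int[OF f, of "{i}" "{i'}"] bool_hom_empty[OF f] that by simp
    then show False using that by auto
  qed
  have "f X = preim \<phi> m X" if X: "X \<subseteq> {1..n}" for X
  proof -
    have "f {i} \<subseteq> {1..m}" if "i \<in> X" for i using bool_hom_subset[OF f, of "{i}"] that X by blast
    then show ?thesis
      using bool_hom_UN_singletons[OF f X] atoms_disjoint \<phi> X unfolding preim_def by blast
  qed
  with \<phi> show ?thesis using that by blast
qed

locale effect_alg =
  fixes pl :: "'a \<Rightarrow> 'a \<Rightarrow> 'a option" and z u :: 'a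
  assumes effect_algebra: "effect_algebra pl z u"
begin

lemma sum_comm: "pl a b = pl b a"
  using effect_algebra unfolding effect_algebra_def by metis

lemma sum_assoc: "pl a b = Some d \<Longrightarrow> pl d c = Some r \<Longrightarrow> \<exists>e. pl b c = Some e \<and> pl a e = Some r"
  using effect_algebra unfolding effect_algebra_def by (metis option.distinct(1))

lemma sum_assoc_rev:
  assumes "pl b c = Some e" "pl a e = Some r"
  shows "\<exists>d. pl a b = Some d \<and> pl d c = Some r"
proof -
  obtain d where "pl b a = Some d" "pl c d = Some r"
    using sum_assoc[of c b e a r] assms sum_comm by metis
  then show ?thesis using sum_comm by metis
qed

lemma compl_exists: "\<exists>b. pl a b = Some u"
  using effect_algebra unfolding effect_algebra_def by metis

lemma compl_unique: "pl a b = Some u \<Longrightarrow> pl a c = Some u \<Longrightarrow> b = c"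
  using effect_algebra unfolding effect_algebra_def by metis

lemma summable_with_one: "pl a u \<noteq> None \<Longrightarrow> a = z"
  using effect_algebra unfolding effect_algebra_def by metis

lemma sum_zero_one: "pl z u = Some u"
proof -
  obtain c where c: "pl u c = Some u" using compl_exists by blast
  then have "c = z" using summable_with_one sum_comm by (metis option.distinct(1))
  then show ?thesis using c sum_comm by simp
qed

lemma sum_zero_left: "pl z a = Some a"
proof -
  obtain c where c: "pl a c = Some u" using compl_exists by blast
  obtain d where d: "pl z a = Some d" "pl d c = Some u" using sum_assoc_rev[OF c sum_zero_one] by blast
  have "d = a" using compl_unique[of c d a] d(2) c sum_comm by simp
  then show ?thesis using d by simp
qed

lemma sum_zero_right: "pl a z = Some a"
  using sum_zero_left sum_comm by simp

lemma sum_cancel_left: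
  assumes "pl a b = Some s" "pl a c = Some s"
  shows "b = c"
proof -
  obtain w where w: "pl s w = Some u" using compl_exists by blast
  obtain e where "pl a w = Some e" "pl b e = Some u" using sum_assoc assms(1) w sum_comm by metis
  moreover obtain e' where "pl a w = Some e'" "pl c e' = Some u" using sum_assoc assms(2) w sum_comm by metis
  ultimately show "b = c" using compl_unique sum_comm by (metis option.inject)
qed

lemma sum_eq_zero_right: "pl a b = Some z \<Longrightarrow> b = z"
  using sum_assoc[OF _ sum_zero_one] summable_with_one by blast

lemma sum_eq_zero_left: "pl a b = Some z \<Longrightarrow> a = z"
  using sum_eq_zero_right sum_comm by metis

lemma sum_interchange:
  assumes "pl a b = Some p" "pl c d = Some q" "pl p q = Some r"
  shows "\<exists>p' q'. pl a c = Some p' \<and> pl b d = Some q' \<and> pl p' q' = Some r"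
proof -
  obtain e where e: "pl b q = Some e" "pl a e = Some r" using sum_assoc assms(1,3) by blast
  obtain f where f: "pl b c = Some f" "pl f d = Some e" using sum_assoc_rev assms(2) e(1) by blast
  obtain q' where q': "pl b d = Some q'" "pl c q' = Some e" using sum_assoc f sum_comm by metis
  obtain p' where "pl a c = Some p'" "pl p' q' = Some r" using sum_assoc_rev q'(2) e(2) by blast
  then show ?thesis using q' by blast
qed

inductive has_sum :: "('b \<Rightarrow> 'a) \<Rightarrow> 'b set \<Rightarrow> 'a \<Rightarrow> bool" where
  has_sum_empty: "has_sum a {} z"
| has_sum_insert: "has_sum a I s \<Longrightarrow> i \<notin> I \<Longrightarrow> pl s (a i) = Some t \<Longrightarrow> has_sum a (insert i I) t"

lemma has_sum_finite: "has_sum a I s \<Longrightarrow> finite I"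
  by (induction rule: has_sum.induct) auto

lemma has_sum_cong: "has_sum a I s \<Longrightarrow> (\<And>i. i \<in> I \<Longrightarrow> a i = b i) \<Longrightarrow> has_sum b I s"
  by (induction rule: has_sum.induct) (auto intro: has_sum.intros)

lemma has_sum_remove:
  "has_sum a J t \<Longrightarrow> i \<in> J \<Longrightarrow> \<exists>s. has_sum a (J - {i}) s \<and> pl s (a i) = Some t"
proof (induction arbitrary: i rule: has_sum.induct)
  case (has_sum_empty a)
  then show ?case by simp
next
  case (has_sum_insert a I s j t)
  show ?case
  proof (cases "i = j")
    case True
    then show ?thesis using has_sum_insert by auto
  next
    case False
    then obtain s0 where s0: "has_sum a (I - {i}) s0" "pl s0 (a i) = Some s"
      using has_sum_insert by auto
    obtain e where e: "pl (a i) (a j) = Some e" "pl s0 e = Some t"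
      using sum_assoc[OF s0(2) has_sum_insert(3)] by blast
    obtain r where r: "pl s0 (a j) = Some r" "pl r (a i) = Some t"
      using sum_assoc_rev e sum_comm by metis
    have "has_sum a (insert j (I - {i})) r" using s0 r has_sum_insert(2) by (auto intro: has_sum.intros)
    moreover have "insert j (I - {i}) = insert j I - {i}" using False by auto
    ultimately show ?thesis using r by auto
  qed
qed

lemma has_sum_insertD:
  "i \<notin> I \<Longrightarrow> has_sum a (insert i I) t \<Longrightarrow> \<exists>s. has_sum a I s \<and> pl s (a i) = Some t"
  using has_sum_remove[of a "insert i I" t i] by auto

lemma has_sum_emptyD: "has_sum a {} s \<Longrightarrow> s = z"
  by (cases rule: has_sum.cases) auto

lemma has_sum_unique: "has_sum a I s \<Longrightarrow> has_sum a I t \<Longrightarrow> s = t"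
proof (induction arbitrary: t rule: has_sum.induct)
  case (has_sum_empty a)
  then show ?case using has_sum_emptyD by metis
next
  case (has_sum_insert a I s i t t')
  then show ?case using has_sum_insertD[OF has_sum_insert.hyps(2) has_sum_insert.prems] by fastforce
qed

lemma has_sum_singleton: "has_sum a {i} (a i)"
  using has_sum_insert[OF has_sum_empty, of i a "a i"] sum_zero_left by simp

lemma has_sum_Un:
  "has_sum a J t \<Longrightarrow> I \<inter> J = {} \<Longrightarrow> has_sum a I s \<Longrightarrow> pl s t = Some r \<Longrightarrow> has_sum a (I \<union> J) r"
proof (induction arbitrary: r rule: has_sum.induct)
  case (has_sum_empty a)
  then show ?case using sum_zero_right by auto
next
  case (has_sum_insert a J t' j t)
  obtain r' where r': "pl s t' = Some r'" "pl r' (a j) = Some r"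
    using sum_assoc_rev[OF has_sum_insert(3) has_sum_insert(7)] by blast
  have "has_sum a (I \<union> J) r'" using has_sum_insert r' by auto
  then have "has_sum a (insert j (I \<union> J)) r" using has_sum_insert r' by (auto intro: has_sum.intros)
  then show ?case by simp
qed

lemma has_sum_split:
  assumes "I \<inter> J = {}" "has_sum a (I \<union> J) r"
  shows "\<exists>s t. has_sum a I s \<and> has_sum a J t \<and> pl s t = Some r"
proof -
  have "finite J" using has_sum_finite[OF assms(2)] by simp
  then show ?thesis using assms
  proof (induction arbitrary: r rule: finite_induct)
    case empty
    then show ?case using sum_zero_right has_sum_empty by auto
  next
    case (insert j J)
    have "I \<union> insert j J = insert j (I \<union> J)" "j \<notin> I \<union> J" using insert by auto
    then obtain r0 where r0: "has_sum a (I \<union> J) r0" "pl r0 (a j) = Some r"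
      using has_sum_insertD insert.prems by metis
    obtain s t0 where st: "has_sum a I s" "has_sum a J t0" "pl s t0 = Some r0"
      using insert.IH insert.prems r0(1) by blast
    obtain t where t: "pl t0 (a j) = Some t" "pl s t = Some r" using sum_assoc[OF st(3) r0(2)] by blast
    have "has_sum a (insert j J) t" using st t insert by (auto intro: has_sum.intros)
    then show ?case using st t by blast
  qed
qed

lemma has_sum_subset:
  assumes "has_sum a I r" "X \<subseteq> I"
  shows "\<exists>s. has_sum a X s"
proof -
  have "X \<union> (I - X) = I" using assms(2) by blast
  then show ?thesis using has_sum_split[of X "I - X" a r] assms(1) by auto
qed

lemma has_sum_zero_summand:
  assumes "has_sum c K z" "k \<in> K"
  shows "c k = z"
proof -
  obtain s where "pl s (c k) = Some z" using has_sum_remove[OF assms] by blast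
  then show ?thesis by (rule sum_eq_zero_right)
qed

lemma has_sum_reindex:
  assumes "inj_on h K"
  shows "has_sum a (h ` K) s \<longleftrightarrow> has_sum (\<lambda>k. a (h k)) K s"
proof
  assume "has_sum a (h ` K) s"
  then have "finite K" using has_sum_finite finite_image_iff assms by blast
  then show "has_sum (\<lambda>k. a (h k)) K s" using \<open>has_sum a (h ` K) s\<close> assms
  proof (induction arbitrary: s rule: finite_induct)
    case empty
    then show ?case using has_sum_emptyD has_sum_empty by auto
  next
    case (insert k K)
    have hk: "h k \<notin> h ` K" using insert.prems(2) insert.hyps(2) by auto
    have "has_sum a (insert (h k) (h ` K)) s" using insert.prems(1) by simp
    then obtain s0 where s0: "has_sum a (h ` K) s0" "pl s0 (a (h k)) = Some s"
      using has_sum_insertD[OF hk] by blast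
    have "has_sum (\<lambda>k. a (h k)) K s0" using insert.IH s0(1) insert.prems(2) by simp
    from has_sum.intros(2)[OF this insert.hyps(2)] s0(2) show ?case by simp
  qed
next
  have "has_sum b K s \<Longrightarrow> \<forall>k\<in>K. b k = a (h k) \<Longrightarrow> inj_on h K \<Longrightarrow> has_sum a (h ` K) s" for b
  proof (induction rule: has_sum.induct)
    case (has_sum_empty b)
    then show ?case using has_sum.intros(1) by simp
  next
    case (has_sum_insert b I s i t)
    have "h i \<notin> h ` I" using has_sum_insert.prems(2) has_sum_insert.hyps(2) by auto
    moreover have "has_sum a (h ` I) s" using has_sum_insert.IH has_sum_insert.prems by simp
    moreover have "pl s (a (h i)) = Some t" using has_sum_insert.hyps(3) has_sum_insert.prems(1) by simp
    ultimately show ?case using has_sum.intros(2) by simp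
  qed
  then show "has_sum (\<lambda>k. a (h k)) K s \<Longrightarrow> has_sum a (h ` K) s" using assms by blast
qed

lemma has_sum_UN:
  "finite Y \<Longrightarrow> (\<forall>i\<in>Y. \<forall>j\<in>Y. i \<noteq> j \<longrightarrow> F i \<inter> F j = {}) \<Longrightarrow>
    (\<forall>i\<in>Y. has_sum b (F i) (a i)) \<Longrightarrow> has_sum a Y s \<Longrightarrow> has_sum b (\<Union>i\<in>Y. F i) s"
proof (induction arbitrary: s rule: finite_induct)
  case empty
  then show ?case using has_sum_emptyD has_sum_empty by auto
next
  case (insert y Y)
  obtain s0 where s0: "has_sum a Y s0" "pl s0 (a y) = Some s" using has_sum_insertD insert by metis
  have Y: "has_sum b (\<Union>i\<in>Y. F i) s0" using insert s0 by auto
  have disj: "(\<Union>i\<in>Y. F i) \<inter> F y = {}" using insert by auto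
  have y: "has_sum b (F y) (a y)" using insert.prems(2) by simp
  have "has_sum b ((\<Union>i\<in>Y. F i) \<union> F y) s" using has_sum_Un[OF y disj Y s0(2)] .
  moreover have "(\<Union>i\<in>insert y Y. F i) = (\<Union>i\<in>Y. F i) \<union> F y" by blast
  ultimately show ?case by simp
qed

lemma has_sum_fibres:
  assumes "\<forall>p\<in>P. \<pi> p \<in> I" "\<forall>i\<in>I. has_sum d {p \<in> P. \<pi> p = i} (a i)" "has_sum a I s"
  shows "has_sum d P s"
proof -
  have "has_sum d (\<Union>i\<in>I. {p \<in> P. \<pi> p = i}) s"
    by (rule has_sum_UN[OF has_sum_finite[OF assms(3)] _ assms(2,3)]) blast
  moreover have "(\<Union>i\<in>I. {p \<in> P. \<pi> p = i}) = P" using assms(1) by auto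
  ultimately show ?thesis by simp
qed

lemma has_sum_bij_betw:
  assumes "bij_betw \<beta> M P" "Q \<subseteq> P" "has_sum d Q s"
  shows "has_sum (\<lambda>l. d (\<beta> l)) {l \<in> M. \<beta> l \<in> Q} s"
proof -
  have "\<beta> ` {l \<in> M. \<beta> l \<in> Q} = Q" using assms(1,2) unfolding bij_betw_def by blast
  moreover have "inj_on \<beta> {l \<in> M. \<beta> l \<in> Q}"
    using assms(1) unfolding bij_betw_def by (blast intro: inj_on_subset)
  ultimately show ?thesis using has_sum_reindex[of \<beta> "{l \<in> M. \<beta> l \<in> Q}" d s] assms(3) by simp
qed

lemma has_sum_pointwise:
  "finite K \<Longrightarrow> (\<forall>k\<in>K. pl (e k) (c' k) = Some (c k)) \<Longrightarrow> has_sum c K S \<Longrightarrow>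
    \<exists>E C'. has_sum e K E \<and> has_sum c' K C' \<and> pl E C' = Some S"
proof (induction arbitrary: S rule: finite_induct)
  case empty
  then show ?case using has_sum_emptyD has_sum_empty sum_zero_left by metis
next
  case (insert k K)
  obtain S0 where S0: "has_sum c K S0" "pl S0 (c k) = Some S" using has_sum_insertD insert by metis
  have ek: "pl (e k) (c' k) = Some (c k)" and eK: "\<forall>k\<in>K. pl (e k) (c' k) = Some (c k)"
    using insert.prems(1) by auto
  obtain E0 C0 where EC: "has_sum e K E0" "has_sum c' K C0" "pl E0 C0 = Some S0"
    using insert.IH[OF eK S0(1)] by blast
  obtain p q where pq: "pl E0 (e k) = Some p" "pl C0 (c' k) = Some q" "pl p q = Some S"
    using sum_interchange[OF EC(3) ek S0(2)] by blast
  have "has_sum e (insert k K) p" "has_sum c' (insert k K) q"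
    using pq EC insert.hyps by (auto intro: has_sum.intros)
  then show ?case using pq by blast
qed

lemma riesz_has_sum:
  "finite K \<Longrightarrow> riesz_decomposition pl \<Longrightarrow> has_sum c K S \<Longrightarrow> ea_le pl x S \<Longrightarrow>
    \<exists>e c'. (\<forall>k\<in>K. pl (e k) (c' k) = Some (c k)) \<and> has_sum e K x"
proof (induction arbitrary: x S rule: finite_induct)
  case empty
  then have "x = z" using has_sum_emptyD sum_eq_zero_left unfolding ea_le_def by blast
  then show ?case using has_sum_empty by auto
next
  case (insert k K)
  obtain S0 where S0: "has_sum c K S0" "pl S0 (c k) = Some S" using has_sum_insertD insert by metis
  obtain x1 x2 where x: "ea_le pl x1 S0" "ea_le pl x2 (c k)" "pl x1 x2 = Some x"
    using insert.prems(1,3) S0(2) unfolding riesz_decomposition_def by blast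
  obtain e c' where ec: "\<forall>k\<in>K. pl (e k) (c' k) = Some (c k)" "has_sum e K x1"
    using insert.IH[OF insert.prems(1) S0(1) x(1)] by blast
  obtain r where r: "pl x2 r = Some (c k)" using x(2) unfolding ea_le_def by blast
  have "has_sum (e(k := x2)) K x1" by (rule has_sum_cong[OF ec(2)]) (use insert.hyps(2) in auto)
  then have "has_sum (e(k := x2)) (insert k K) x" using x(3) insert.hyps(2) by (auto intro: has_sum.intros)
  moreover have "\<forall>j\<in>insert k K. pl ((e(k := x2)) j) ((c'(k := r)) j) = Some (c j)" using ec r by auto
  ultimately show ?case by blast
qed

lemma riesz_refinement:
  "finite J \<Longrightarrow> riesz_decomposition pl \<Longrightarrow> finite K \<Longrightarrow> has_sum b J s \<Longrightarrow> has_sum c K s \<Longrightarrow>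
    \<exists>d. (\<forall>j\<in>J. has_sum (\<lambda>k. d (j, k)) K (b j)) \<and> (\<forall>k\<in>K. has_sum (\<lambda>j. d (j, k)) J (c k))"
proof (induction arbitrary: s c rule: finite_induct)
  case empty
  then have "has_sum c K z" using has_sum_emptyD[OF empty.prems(3)] by simp
  then have "\<forall>k\<in>K. c k = z" by (metis has_sum_zero_summand)
  then show ?case by (intro exI[of _ "\<lambda>_. z"]) (simp add: has_sum.intros(1))
next
  case (insert j J)
  obtain s0 where s0: "has_sum b J s0" "pl s0 (b j) = Some s"
    using has_sum_insertD[OF insert.hyps(2) insert.prems(3)] by blast
  have bj: "pl (b j) s0 = Some s" using s0(2) sum_comm by simp
  then have "ea_le pl (b j) s" unfolding ea_le_def by blast
  then obtain e c' where ec: "\<forall>k\<in>K. pl (e k) (c' k) = Some (c k)" "has_sum e K (b j)"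
    using riesz_has_sum[OF insert.prems(2,1,4)] by blast
  obtain E C' where EC: "has_sum e K E" "has_sum c' K C'" "pl E C' = Some s"
    using has_sum_pointwise[OF insert.prems(2) ec(1) insert.prems(4)] by blast
  have "E = b j" using has_sum_unique[OF EC(1) ec(2)] .
  then have "C' = s0" using sum_cancel_left[OF _ bj] EC(3) by simp
  then obtain d' where d': "\<forall>j\<in>J. has_sum (\<lambda>k. d' (j, k)) K (b j)"
      "\<forall>k\<in>K. has_sum (\<lambda>j. d' (j, k)) J (c' k)"
    using insert.IH[OF insert.prems(1,2) s0(1), of c'] EC(2) by auto
  define d where "d = (\<lambda>(i, k). if i = j then e k else d' (i, k))"
  have "has_sum (\<lambda>k. d (i, k)) K (b i)" if "i \<in> insert j J" for i
  proof (cases "i = j")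
    case True
    show ?thesis unfolding True by (rule has_sum_cong[OF ec(2)]) (simp add: d_def)
  next
    case False
    then have "i \<in> J" using that by simp
    show ?thesis by (rule has_sum_cong[OF d'(1)[rule_format, OF \<open>i \<in> J\<close>]]) (simp add: d_def False)
  qed
  moreover have "has_sum (\<lambda>i. d (i, k)) (insert j J) (c k)" if k: "k \<in> K" for k
  proof -
    have "has_sum (\<lambda>i. d (i, k)) J (c' k)"
      by (rule has_sum_cong[OF d'(2)[rule_format, OF k]]) (use insert.hyps(2) in \<open>auto simp: d_def\<close>)
    moreover have "pl (c' k) (d (j, k)) = Some (c k)" using ec k sum_comm unfolding d_def by auto
    ultimately show ?thesis using insert.hyps(2) by (auto intro: has_sum.intros)
  qed
  ultimately show ?case by blast
qed

lemma hom_empty: "ea_hom_from_pow pl u n g \<Longrightarrow> g {} = z"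
  unfolding ea_hom_from_pow_def using sum_cancel_left sum_zero_right by (metis empty_subsetI inf_bot_left sup_bot_left)

lemma hom_has_sum:
  assumes g: "ea_hom_from_pow pl u n g" and X: "X \<subseteq> {1..n}"
  shows "has_sum (\<lambda>i. g {i}) X (g X)"
proof -
  have "finite X" using X finite_subset by blast
  then show ?thesis using X
  proof (induction rule: finite_induct)
    case empty
    then show ?case using hom_empty[OF g] has_sum_empty by simp
  next
    case (insert i X)
    then have "pl (g X) (g {i}) = Some (g (insert i X))" using g unfolding ea_hom_from_pow_def by auto
    then show ?case using insert by (auto intro: has_sum.intros)
  qed
qed

text \<open>\<open>THE\<close> gives a junk value on sets that are not summable.\<close>
definition fsum :: "(nat \<Rightarrow> 'a) \<Rightarrow> nat set \<Rightarrow> 'a" where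
  "fsum a X = (THE s. has_sum a X s)"

lemma fsum_eq:
  assumes "has_sum a X s"
  shows "fsum a X = s"
  unfolding fsum_def using assms has_sum_unique[OF _ assms] by (rule the_equality)

lemma has_sum_fsum:
  assumes "has_sum a I r" "X \<subseteq> I"
  shows "has_sum a X (fsum a X)"
proof -
  obtain s where s: "has_sum a X s" using has_sum_subset[OF assms] by blast
  then show ?thesis using fsum_eq[OF s] by simp
qed

lemma fsum_singleton: "fsum a {i} = a i"
  by (rule fsum_eq[OF has_sum_singleton])

lemma fsum_hom:
  assumes a: "has_sum a {1..n} u"
  shows "ea_hom_from_pow pl u n (fsum a)"
  unfolding ea_hom_from_pow_def
proof (intro conjI allI impI)
  show "fsum a {1..n} = u" using fsum_eq[OF a] .
next
  fix X Y assume XY: "X \<subseteq> {1..n} \<and> Y \<subseteq> {1..n} \<and> X \<inter> Y = {}"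
  then have "has_sum a (X \<union> Y) (fsum a (X \<union> Y))" using has_sum_fsum[OF a] by simp
  moreover have "X \<inter> Y = {}" using XY by simp
  ultimately obtain s t where st: "has_sum a X s" "has_sum a Y t" "pl s t = Some (fsum a (X \<union> Y))"
    using has_sum_split by blast
  then show "pl (fsum a X) (fsum a Y) = Some (fsum a (X \<union> Y))"
    using fsum_eq[OF st(1)] fsum_eq[OF st(2)] by simp
qed

lemma preim_elem_arr:
  assumes g: "ea_hom_from_pow pl u n g" and g': "ea_hom_from_pow pl u m g'"
    and \<phi>: "\<forall>j\<in>{1..m}. \<phi> j \<in> {1..n}"
    and fibres: "\<forall>i\<in>{1..n}. has_sum (\<lambda>j. g' {j}) {j \<in> {1..m}. \<phi> j = i} (g {i})"
  shows "elem_arr (n, g) (m, g') (preim \<phi> m)"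
proof -
  have "g' (preim \<phi> m X) = g X" if X: "X \<subseteq> {1..n}" for X
  proof -
    have fib: "has_sum (\<lambda>j. g' {j}) {j \<in> preim \<phi> m X. \<phi> j = i} (g {i})" if "i \<in> X" for i
    proof -
      have "{j \<in> preim \<phi> m X. \<phi> j = i} = {j \<in> {1..m}. \<phi> j = i}" using that unfolding preim_def by auto
      moreover have "i \<in> {1..n}" using that X by blast
      ultimately show ?thesis using fibres by simp
    qed
    have "\<forall>j\<in>preim \<phi> m X. \<phi> j \<in> X" by (simp add: preim_def)
    then have "has_sum (\<lambda>j. g' {j}) (preim \<phi> m X) (g X)"
      by (rule has_sum_fibres[OF _ _ hom_has_sum[OF g X]]) (use fib in blast)
    moreover have "preim \<phi> m X \<subseteq> {1..m}" unfolding preim_def by auto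
    ultimately show ?thesis using has_sum_unique[OF hom_has_sum[OF g']] by blast
  qed
  then show ?thesis unfolding elem_arr_def using bool_hom_preim[OF \<phi>] by auto
qed

lemma elem_arr_fibre_sum:
  assumes g': "ea_hom_from_pow pl u m g'" and f: "elem_arr (n, g) (m, g') f"
    and f_preim: "\<forall>X. X \<subseteq> {1..n} \<longrightarrow> f X = preim \<phi> m X" and i: "i \<in> {1..n}"
  shows "has_sum (\<lambda>j. g' {j}) {j \<in> {1..m}. \<phi> j = i} (g {i})"
proof -
  have fi: "f {i} = {j \<in> {1..m}. \<phi> j = i}" using f_preim i by (simp add: preim_def)
  have "f {i} \<subseteq> {1..m}" using fi by auto
  then have "has_sum (\<lambda>j. g' {j}) (f {i}) (g' (f {i}))" by (rule hom_has_sum[OF g'])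
  moreover have "g' (f {i}) = g {i}" using f i unfolding elem_arr_def by simp
  ultimately show ?thesis using fi by simp
qed

text \<open>Refine the two decompositions of each atom of \<open>2^[n]\<close> separately and glue the
  refinements into one family indexed by the fibre product.\<close>
lemma fibrewise_refinement:
  assumes R: "riesz_decomposition pl"
    and \<phi>1: "\<forall>j\<in>{1..n1}. \<phi>1 j \<in> {1..n}" and \<phi>2: "\<forall>j\<in>{1..n2}. \<phi>2 j \<in> {1..n}"
    and b: "\<forall>i\<in>{1..n}. has_sum b {j \<in> {1..n1}. \<phi>1 j = i} (a i)"
    and c: "\<forall>i\<in>{1..n}. has_sum c {j \<in> {1..n2}. \<phi>2 j = i} (a i)"
  obtains d where "\<forall>j\<in>{1..n1}. has_sum d {p \<in> fibre_product \<phi>1 n1 \<phi>2 n2. fst p = j} (b j)"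
    and "\<forall>k\<in>{1..n2}. has_sum d {p \<in> fibre_product \<phi>1 n1 \<phi>2 n2. snd p = k} (c k)"
proof -
  define F1 where "F1 i = {j \<in> {1..n1}. \<phi>1 j = i}" for i
  define F2 where "F2 i = {j \<in> {1..n2}. \<phi>2 j = i}" for i
  have "\<exists>D. (\<forall>j\<in>F1 i. has_sum (\<lambda>k. D (j, k)) (F2 i) (b j)) \<and> (\<forall>k\<in>F2 i. has_sum (\<lambda>j. D (j, k)) (F1 i) (c k))"
    if "i \<in> {1..n}" for i
    using riesz_refinement[OF _ R _ b[rule_format, OF that] c[rule_format, OF that]]
    unfolding F1_def F2_def by simp
  then obtain D where D: "\<And>i. i \<in> {1..n} \<Longrightarrow> (\<forall>j\<in>F1 i. has_sum (\<lambda>k. D i (j, k)) (F2 i) (b j)) \<and>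
      (\<forall>k\<in>F2 i. has_sum (\<lambda>j. D i (j, k)) (F1 i) (c k))"
    by metis
  define d where "d p = D (\<phi>1 (fst p)) p" for p
  let ?P = "fibre_product \<phi>1 n1 \<phi>2 n2"
  have "has_sum d {p \<in> ?P. fst p = j} (b j)" if j: "j \<in> {1..n1}" for j
  proof -
    have "{p \<in> ?P. fst p = j} = Pair j ` F2 (\<phi>1 j)" using j by (auto simp: fibre_product_def F2_def)
    moreover have "j \<in> F1 (\<phi>1 j)" "\<phi>1 j \<in> {1..n}" using j \<phi>1 by (auto simp: F1_def)
    then have "has_sum (\<lambda>k. d (j, k)) (F2 (\<phi>1 j)) (b j)" using D unfolding d_def by simp
    moreover have "inj_on (Pair j) (F2 (\<phi>1 j))" by (simp add: inj_on_def)
    ultimately show ?thesis using has_sum_reindex[of "Pair j" "F2 (\<phi>1 j)" d] by simp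
  qed
  moreover have "has_sum d {p \<in> ?P. snd p = k} (c k)" if k: "k \<in> {1..n2}" for k
  proof -
    have "{p \<in> ?P. snd p = k} = (\<lambda>j. (j, k)) ` F1 (\<phi>2 k)" using k by (auto simp: fibre_product_def F1_def)
    moreover have "k \<in> F2 (\<phi>2 k)" "\<phi>2 k \<in> {1..n}" using k \<phi>2 by (auto simp: F2_def)
    then have "has_sum (\<lambda>j. D (\<phi>2 k) (j, k)) (F1 (\<phi>2 k)) (c k)" using D by simp
    then have "has_sum (\<lambda>j. d (j, k)) (F1 (\<phi>2 k)) (c k)"
      by (rule has_sum_cong) (simp add: d_def F1_def)
    moreover have "inj_on (\<lambda>j. (j, k)) (F1 (\<phi>2 k))" by (simp add: inj_on_def)
    ultimately show ?thesis using has_sum_reindex[of "\<lambda>j. (j, k)" "F1 (\<phi>2 k)" d] by simp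
  qed
  ultimately show ?thesis using that by blast
qed

lemma projection_arrow:
  assumes h: "ea_hom_from_pow pl u n h" and \<beta>: "bij_betw \<beta> {1..m} P"
    and \<pi>: "\<forall>p\<in>P. \<pi> p \<in> {1..n}"
    and fibres: "\<forall>i\<in>{1..n}. has_sum d {p \<in> P. \<pi> p = i} (h {i})"
  shows "elem_obj pl u (m, fsum (d \<circ> \<beta>))"
    and "elem_arr (n, h) (m, fsum (d \<circ> \<beta>)) (preim (\<pi> \<circ> \<beta>) m)"
proof -
  have \<beta>P: "\<beta> l \<in> P" if "l \<in> {1..m}" for l using \<beta> that unfolding bij_betw_def by blast
  have "has_sum (\<lambda>i. h {i}) {1..n} u" using hom_has_sum[OF h, of "{1..n}"] h
    unfolding ea_hom_from_pow_def by simp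
  then have "has_sum d P u" using has_sum_fibres[OF \<pi> fibres] by blast
  then have "has_sum (d \<circ> \<beta>) {l \<in> {1..m}. \<beta> l \<in> P} u" using has_sum_bij_betw[OF \<beta> order_refl]
    by (simp add: comp_def)
  moreover have "{l \<in> {1..m}. \<beta> l \<in> P} = {1..m}" using \<beta>P by blast
  ultimately have hom: "ea_hom_from_pow pl u m (fsum (d \<circ> \<beta>))" using fsum_hom by simp
  then show "elem_obj pl u (m, fsum (d \<circ> \<beta>))" unfolding elem_obj_def by simp
  show "elem_arr (n, h) (m, fsum (d \<circ> \<beta>)) (preim (\<pi> \<circ> \<beta>) m)"
  proof (rule preim_elem_arr[OF h hom])
    show "\<forall>l\<in>{1..m}. (\<pi> \<circ> \<beta>) l \<in> {1..n}" using \<beta>P \<pi> by simp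
    show "\<forall>i\<in>{1..n}. has_sum (\<lambda>l. fsum (d \<circ> \<beta>) {l}) {l \<in> {1..m}. (\<pi> \<circ> \<beta>) l = i} (h {i})"
    proof
      fix i assume i: "i \<in> {1..n}"
      have "has_sum (d \<circ> \<beta>) {l \<in> {1..m}. \<beta> l \<in> {p \<in> P. \<pi> p = i}} (h {i})"
        using has_sum_bij_betw[OF \<beta> _ fibres[rule_format, OF i]] by (simp add: comp_def)
      moreover have "{l \<in> {1..m}. \<beta> l \<in> {p \<in> P. \<pi> p = i}} = {l \<in> {1..m}. (\<pi> \<circ> \<beta>) l = i}"
        using \<beta>P by auto
      ultimately show "has_sum (\<lambda>l. fsum (d \<circ> \<beta>) {l}) {l \<in> {1..m}. (\<pi> \<circ> \<beta>) l = i} (h {i})"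
        by (simp add: fsum_singleton comp_def)
    qed
  qed
qed

lemma riesz_imp_amalgamated:
  assumes R: "riesz_decomposition pl"
  shows "elem_cat_amalgamated pl u"
  unfolding elem_cat_amalgamated_def
proof (intro allI impI, elim conjE)
  fix ob ob1 ob2 :: "nat \<times> (nat set \<Rightarrow> 'a)" and f1 f2
  assume ob: "elem_obj pl u ob" "elem_obj pl u ob1" "elem_obj pl u ob2"
    and f: "elem_arr ob ob1 f1" "elem_arr ob ob2 f2"
  obtain n g n1 g1 n2 g2 where obs: "ob = (n, g)" "ob1 = (n1, g1)" "ob2 = (n2, g2)"
    by (cases ob, cases ob1, cases ob2) auto
  have g1: "ea_hom_from_pow pl u n1 g1" and g2: "ea_hom_from_pow pl u n2 g2"
    using ob obs unfolding elem_obj_def by auto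
  have f1: "elem_arr (n, g) (n1, g1) f1" and f2: "elem_arr (n, g) (n2, g2) f2" using f obs by auto
  have "bool_hom n n1 f1" using f1 unfolding elem_arr_def by simp
  then obtain \<phi>1 where \<phi>1: "\<forall>j\<in>{1..n1}. \<phi>1 j \<in> {1..n}" "\<forall>X. X \<subseteq> {1..n} \<longrightarrow> f1 X = preim \<phi>1 n1 X"
    by (rule bool_hom_preim_repr)
  have "bool_hom n n2 f2" using f2 unfolding elem_arr_def by simp
  then obtain \<phi>2 where \<phi>2: "\<forall>j\<in>{1..n2}. \<phi>2 j \<in> {1..n}" "\<forall>X. X \<subseteq> {1..n} \<longrightarrow> f2 X = preim \<phi>2 n2 X"
    by (rule bool_hom_preim_repr)
  let ?P = "fibre_product \<phi>1 n1 \<phi>2 n2"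
  have "\<forall>i\<in>{1..n}. has_sum (\<lambda>j. g1 {j}) {j \<in> {1..n1}. \<phi>1 j = i} (g {i})"
    "\<forall>i\<in>{1..n}. has_sum (\<lambda>j. g2 {j}) {j \<in> {1..n2}. \<phi>2 j = i} (g {i})"
    using elem_arr_fibre_sum[OF g1 f1 \<phi>1(2)] elem_arr_fibre_sum[OF g2 f2 \<phi>2(2)] by simp_all
  then obtain d where rows: "\<forall>j\<in>{1..n1}. has_sum d {p \<in> ?P. fst p = j} (g1 {j})"
      and cols: "\<forall>k\<in>{1..n2}. has_sum d {p \<in> ?P. snd p = k} (g2 {k})"
    by (rule fibrewise_refinement[OF R \<phi>1(1) \<phi>2(1)])
  have "finite ?P" by (rule finite_subset[of _ "{1..n1} \<times> {1..n2}"]) (auto simp: fibre_product_def)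
  then obtain \<beta> where \<beta>: "bij_betw \<beta> {1..card ?P} ?P" using ex_bij_betw_nat_finite_1 by blast
  have \<beta>P: "\<beta> l \<in> ?P" if "l \<in> {1..card ?P}" for l using \<beta> that unfolding bij_betw_def by blast
  have "\<forall>p\<in>?P. fst p \<in> {1..n1}" "\<forall>p\<in>?P. snd p \<in> {1..n2}" by (auto simp: fibre_product_def)
  note arr1 = projection_arrow[OF g1 \<beta> this(1) rows] and arr2 = projection_arrow[OF g2 \<beta> this(2) cols]
  have square: "preim (fst \<circ> \<beta>) (card ?P) (f1 X) = preim (snd \<circ> \<beta>) (card ?P) (f2 X)"
    if "X \<subseteq> {1..n}" for X
    using preim_fibre_product_square[of "card ?P" \<beta>] \<beta>P that \<phi>1(2) \<phi>2(2) by simp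
  show "\<exists>ob3 k1 k2. elem_obj pl u ob3 \<and> elem_arr ob1 ob3 k1 \<and> elem_arr ob2 ob3 k2 \<and>
      (\<forall>X. X \<subseteq> {1..fst ob} \<longrightarrow> k1 (f1 X) = k2 (f2 X))"
    using arr1 arr2 square obs(2,3) by (intro exI[of _ "(card ?P, fsum (d \<circ> \<beta>))"]) (auto simp: obs(1))
qed

lemma has_sum_triple_12:
  assumes "pl x y = Some s"
  shows "has_sum (triple x y w) {1..2} s"
proof -
  have x: "has_sum (triple x y w) {1} x" using has_sum_singleton[of "triple x y w" 1] by (simp add: triple_def)
  have "has_sum (triple x y w) (insert 2 {1}) s"
    using has_sum.intros(2)[OF x, of 2 s] assms by (simp add: triple_def)
  moreover have "insert 2 {1} = {1..2::nat}" by auto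
  ultimately show ?thesis by simp
qed

lemma has_sum_triple:
  assumes "pl x y = Some s" "pl s w = Some u"
  shows "has_sum (triple x y w) {1..3} u"
proof -
  have "has_sum (triple x y w) (insert 3 {1..2}) u"
    using has_sum.intros(2)[OF has_sum_triple_12[OF assms(1)]] assms(2) by (simp add: triple_def)
  moreover have "insert 3 {1..2} = {1..3::nat}" by auto
  ultimately show ?thesis by simp
qed

lemma merge_arrow:
  assumes xy: "pl x y = Some s" and sw: "pl s w = Some u"
  shows "elem_obj pl u (2, fsum (triple s w w))"
    and "elem_obj pl u (3, fsum (triple x y w))"
    and "elem_arr (2, fsum (triple s w w)) (3, fsum (triple x y w)) (preim (\<lambda>j. if j \<le> 2 then 1 else 2) 3)"
proof -
  have hom2: "ea_hom_from_pow pl u 2 (fsum (triple s w w))"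
    using fsum_hom[OF has_sum_triple_12[OF sw]] .
  have hom3: "ea_hom_from_pow pl u 3 (fsum (triple x y w))"
    using fsum_hom[OF has_sum_triple[OF xy sw]] .
  show "elem_obj pl u (2, fsum (triple s w w))" "elem_obj pl u (3, fsum (triple x y w))"
    using hom2 hom3 unfolding elem_obj_def by simp_all
  show "elem_arr (2, fsum (triple s w w)) (3, fsum (triple x y w)) (preim (\<lambda>j. if j \<le> 2 then 1 else 2) 3)"
  proof (rule preim_elem_arr[OF hom2 hom3])
    show "\<forall>j\<in>{1..3}. (if j \<le> 2 then 1 else 2) \<in> {1..2::nat}" by simp
    show "\<forall>i\<in>{1..2}. has_sum (\<lambda>j. fsum (triple x y w) {j}) {j \<in> {1..3}. (if j \<le> 2 then 1 else 2) = i}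
        (fsum (triple s w w) {i})"
    proof
      fix i :: nat assume "i \<in> {1..2}"
      then consider "i = 1" | "i = 2" by fastforce
      then show "has_sum (\<lambda>j. fsum (triple x y w) {j}) {j \<in> {1..3}. (if j \<le> 2 then 1 else 2) = i}
          (fsum (triple s w w) {i})"
      proof cases
        case 1
        have "{j \<in> {1..3}. (if j \<le> 2 then 1 else 2) = i} = {1..2::nat}" using 1 by auto
        moreover have "fsum (triple s w w) {i} = s" using 1 by (simp add: fsum_singleton triple_def)
        moreover have "has_sum (\<lambda>j. fsum (triple x y w) {j}) {1..2} s"
          using has_sum_triple_12[OF xy] by (simp add: fsum_singleton)
        ultimately show ?thesis by simp
      next
        case 2
        have "{j \<in> {1..3}. (if j \<le> 2 then 1 else 2) = i} = {3::nat}" using 2 by auto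
        moreover have "fsum (triple s w w) {i} = w" "triple x y w 3 = w"
          using 2 by (simp_all add: fsum_singleton triple_def)
        ultimately show ?thesis using has_sum_singleton[of "triple x y w" 3] by (simp add: fsum_singleton)
      qed
    qed
  qed
qed

text \<open>The decomposition is \<open>A = (A \<inter> B1) \<union> (A \<inter> B2)\<close>.\<close>
lemma hom_riesz_decomposition:
  assumes g: "ea_hom_from_pow pl u m g"
    and B: "B1 \<subseteq> {1..m}" "B2 \<subseteq> {1..m}" "B1 \<inter> B2 = {}" and A: "A \<subseteq> B1 \<union> B2"
  shows "\<exists>x1 x2. ea_le pl x1 (g B1) \<and> ea_le pl x2 (g B2) \<and> pl x1 x2 = Some (g A)"
proof -
  have add: "pl (g X) (g Y) = Some (g (X \<union> Y))" if "X \<subseteq> {1..m}" "Y \<subseteq> {1..m}" "X \<inter> Y = {}" for X Y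
    using g that unfolding ea_hom_from_pow_def by blast
  have "pl (g (A \<inter> B1)) (g (A \<inter> B2)) = Some (g ((A \<inter> B1) \<union> (A \<inter> B2)))"
    by (rule add) (use B in blast)+
  moreover have "(A \<inter> B1) \<union> (A \<inter> B2) = A" using A by blast
  ultimately have "pl (g (A \<inter> B1)) (g (A \<inter> B2)) = Some (g A)" by simp
  moreover have "ea_le pl (g (A \<inter> Bi)) (g Bi)" if Bi: "Bi \<subseteq> {1..m}" for Bi
  proof -
    have "pl (g (A \<inter> Bi)) (g (Bi - A)) = Some (g ((A \<inter> Bi) \<union> (Bi - A)))"
      by (rule add) (use Bi in blast)+
    moreover have "(A \<inter> Bi) \<union> (Bi - A) = Bi" by blast
    ultimately show ?thesis unfolding ea_le_def by auto
  qed
  ultimately show ?thesis using B by blast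
qed

lemma amalgamated_imp_riesz:
  assumes amalg: "elem_cat_amalgamated pl u"
  shows "riesz_decomposition pl"
  unfolding riesz_decomposition_def
proof (intro allI impI, elim conjE)
  fix x v1 v2 s
  assume v: "pl v1 v2 = Some s" and "ea_le pl x s"
  then obtain t where t: "pl x t = Some s" unfolding ea_le_def by blast
  obtain w where w: "pl s w = Some u" using compl_exists by blast
  let ?merge = "preim (\<lambda>j. if j \<le> 2 then 1 else 2) 3"
  note V = merge_arrow[OF v w] and X = merge_arrow[OF t w]
  obtain m g k1 k2 where g: "ea_hom_from_pow pl u m g"
    and k1: "elem_arr (3, fsum (triple v1 v2 w)) (m, g) k1"
    and k2: "elem_arr (3, fsum (triple x t w)) (m, g) k2"
    and square: "\<forall>Y. Y \<subseteq> {1..2} \<longrightarrow> k1 (?merge Y) = k2 (?merge Y)"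
    using amalg[unfolded elem_cat_amalgamated_def, rule_format, OF conjI[OF V(1) conjI[OF V(2)
        conjI[OF X(2) conjI[OF V(3) X(3)]]]]]
    unfolding elem_obj_def by fastforce
  have bh1: "bool_hom 3 m k1" and bh2: "bool_hom 3 m k2" using k1 k2 unfolding elem_arr_def by simp_all
  have atoms: "{1::nat} \<subseteq> {1..3}" "{2::nat} \<subseteq> {1..3}" by auto
  have "?merge {1} = {1, 2}" by (auto simp: preim_def)
  then have "k1 {1, 2} = k2 {1, 2}" using square[rule_format, of "{1}"] by simp
  moreover have "k1 {1, 2} = k1 {1} \<union> k1 {2}" "k2 {1, 2} = k2 {1} \<union> k2 {2}"
    using bool_hom_Un[OF bh1 atoms] bool_hom_Un[OF bh2 atoms] by (simp_all add: insert_commute)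
  ultimately have "k2 {1} \<subseteq> k1 {1} \<union> k1 {2}" by blast
  moreover have "k1 {1} \<inter> k1 {2} = {}" using bool_hom_Int[OF bh1 atoms] bool_hom_empty[OF bh1] by simp
  ultimately obtain x1 x2 where "ea_le pl x1 (g (k1 {1}))" "ea_le pl x2 (g (k1 {2}))" "pl x1 x2 = Some (g (k2 {1}))"
    using hom_riesz_decomposition[OF g bool_hom_subset[OF bh1 atoms(1)] bool_hom_subset[OF bh1 atoms(2)]] by blast
  moreover have "g (k1 {1}) = v1" "g (k1 {2}) = v2" "g (k2 {1}) = x"
    using k1 k2 atoms unfolding elem_arr_def by (simp_all add: fsum_singleton triple_def)
  ultimately show "\<exists>x1 x2. ea_le pl x1 v1 \<and> ea_le pl x2 v2 \<and> pl x1 x2 = Some x" by auto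
qed

end

theorem mainTheorem2:
  fixes pl :: "'a \<Rightarrow> 'a \<Rightarrow> 'a option" and z u :: 'a
  assumes "effect_algebra pl z u"
  shows "riesz_decomposition pl \<longleftrightarrow> elem_cat_amalgamated pl u"
proof -
  interpret effect_alg pl z u by (rule effect_alg.intro) (rule assms)
  show ?thesis using riesz_imp_amalgamated amalgamated_imp_riesz by blast
qed

end
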